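(* Let $(B,\mathfrak{m})$ be a deformation base, $X$ a vector space, $V\subseteq X$ a linear subspace and $M\subseteq B\widehat{\otimes}X$ a pseudoclosed $B$-submodule. Then for every integer $k\ge0$, $$\mathfrak{m}^kM\cap(\mathfrak{m}^kV+\mathfrak{m}^{k+1}X)\subseteq\mathfrak{m}^k\big(M\cap(V+\mathfrak{m}X)\big)+\mathfrak{m}^{k+1}M.$$
   Context: Deformation base: complete local Noetherian unital $\mathbb{C}$-algebra $B$ with maximal ideal $\mathfrak{m}$, $B/\mathfrak{m}=\mathbb{C}$. $B\widehat{\otimes}X=\varprojlim(B/\mathfrak{m}^k\otimes X)$. For a subspace $Y\subseteq B\widehat{\otimes}X$ (in particular for $Y=V$ or $Y=X$ viewed inside $B\widehat{\otimes}X$): $BY=\{\sum_ib_iy_i:y_i\in Y,b_i\in\mathfrak{m}^{k_i},k_i\to\infty\}$, and $\mathfrak{m}^kY$ is the same set with all $k_i\ge k$ (so $\mathfrak{m}^kX$ is the image of $\mathfrak{m}^k\widehat{\otimes}X$). $M$ is pseudoclosed if $BM\subseteq M$. *)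

theory Defs
  imports Complex_Main
begin

definition is_ideal :: "'b::comm_ring_1 set \<Rightarrow> bool" where
  "is_ideal I \<longleftrightarrow> 0 \<in> I \<and> (\<forall>a\<in>I. \<forall>b\<in>I. a + b \<in> I) \<and> (\<forall>r. \<forall>a\<in>I. r * a \<in> I)"

definition idl_span :: "'b::comm_ring_1 set \<Rightarrow> 'b set" where
  "idl_span S = {(\<Sum>j<n. r j * a j) | (n::nat) r a. \<forall>j<n. a j \<in> S}"

fun idpow :: "'b::comm_ring_1 set \<Rightarrow> nat \<Rightarrow> 'b set" where
  "idpow m 0 = UNIV"
| "idpow m (Suc k) = idl_span {a * b | a b. a \<in> m \<and> b \<in> idpow m k}"

definition noetherian_ring :: "'b::comm_ring_1 itself \<Rightarrow> bool" where
  "noetherian_ring _ \<longleftrightarrow> (\<forall>I::'b set. is_ideal I \<longrightarrow> (\<exists>F. finite F \<and> I = idl_span F))"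

definition deformation_base :: "(complex \<Rightarrow> 'b::comm_ring_1) \<Rightarrow> 'b set \<Rightarrow> bool" where
  "deformation_base emb m \<longleftrightarrow>
     \<comment> \<open>C-algebra structure\<close>
     emb 1 = 1 \<and> (\<forall>a c. emb (a + c) = emb a + emb c) \<and> (\<forall>a c. emb (a * c) = emb a * emb c)
     \<comment> \<open>m is a proper ideal, and B is local with maximal ideal m\<close>
   \<and> is_ideal m \<and> m \<noteq> UNIV \<and> (\<forall>b. b \<notin> m \<longrightarrow> (\<exists>u. b * u = 1))
     \<comment> \<open>residue field B/m = C\<close>
   \<and> (\<forall>b. \<exists>!c. b - emb c \<in> m)
     \<comment> \<open>Noetherian\<close>
   \<and> noetherian_ring TYPE('b)
     \<comment> \<open>m-adically separated and complete\<close>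
   \<and> (\<Inter>k. idpow m k) = {0}
   \<and> (\<forall>x::nat \<Rightarrow> 'b. (\<forall>k. \<exists>N. \<forall>n\<ge>N. x n - x N \<in> idpow m k)
         \<longrightarrow> (\<exists>l. \<forall>k. \<exists>N. \<forall>n\<ge>N. x n - l \<in> idpow m k))"

text \<open>X is modelled as the C-vector space with basis indexed by 'i
  (finitely supported functions 'i => complex).\<close>
definition Xsp :: "('i \<Rightarrow> complex) set" where
  "Xsp = {x. finite {i. x i \<noteq> 0}}"

definition lin_subspace :: "('i \<Rightarrow> complex) set \<Rightarrow> bool" where
  "lin_subspace V \<longleftrightarrow> V \<subseteq> Xsp \<and> (\<lambda>i. 0) \<in> V \<and> (\<forall>x\<in>V. \<forall>y\<in>V. (\<lambda>i. x i + y i) \<in> V)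
      \<and> (\<forall>c. \<forall>x\<in>V. (\<lambda>i. c * x i) \<in> V)"

text \<open>B completed-tensor X = lim (B/m^k tensor X): families in B such that for every k,
  only finitely many coordinates lie outside m^k.\<close>
definition BX :: "'b::comm_ring_1 set \<Rightarrow> ('i \<Rightarrow> 'b) set" where
  "BX m = {f. \<forall>k. finite {i. f i \<notin> idpow m k}}"

text \<open>X (and hence V) viewed inside B completed-tensor X.\<close>
definition incl :: "(complex \<Rightarrow> 'b) \<Rightarrow> ('i \<Rightarrow> complex) \<Rightarrow> 'i \<Rightarrow> 'b" where
  "incl emb x = (\<lambda>i. emb (x i))"

definition series_conv :: "'b::comm_ring_1 set \<Rightarrow> (nat \<Rightarrow> 'i \<Rightarrow> 'b) \<Rightarrow> ('i \<Rightarrow> 'b) \<Rightarrow> bool" where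
  "series_conv m u s \<longleftrightarrow> (\<forall>k. \<exists>N. \<forall>n\<ge>N. \<forall>i. s i - (\<Sum>j<n. u j i) \<in> idpow m k)"

text \<open>m^k Y = sums of b_n y_n, y_n in Y, b_n in m^(k_n), k_n >= k, k_n \<rightarrow> \<infinity>
  (finite sums are included by padding with zero coefficients).\<close>
definition mpow_mod :: "'b::comm_ring_1 set \<Rightarrow> nat \<Rightarrow> ('i \<Rightarrow> 'b) set \<Rightarrow> ('i \<Rightarrow> 'b) set" where
  "mpow_mod m k Y = {s. \<exists>(b::nat \<Rightarrow> 'b) y (kk::nat \<Rightarrow> nat).
      (\<forall>n. y n \<in> Y \<and> b n \<in> idpow m (kk n) \<and> k \<le> kk n)
    \<and> (\<forall>K. \<exists>N. \<forall>n\<ge>N. K \<le> kk n)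
    \<and> series_conv m (\<lambda>n i. b n * y n i) s}"

abbreviation Bspan :: "'b::comm_ring_1 set \<Rightarrow> ('i \<Rightarrow> 'b) set \<Rightarrow> ('i \<Rightarrow> 'b) set" where
  "Bspan m Y \<equiv> mpow_mod m 0 Y"

definition B_submodule :: "'b::comm_ring_1 set \<Rightarrow> ('i \<Rightarrow> 'b) set \<Rightarrow> bool" where
  "B_submodule m M \<longleftrightarrow> M \<subseteq> BX m \<and> (\<lambda>i. 0) \<in> M \<and> (\<forall>x\<in>M. \<forall>y\<in>M. (\<lambda>i. x i + y i) \<in> M)
      \<and> (\<forall>r. \<forall>x\<in>M. (\<lambda>i. r * x i) \<in> M)"

definition pseudoclosed :: "'b::comm_ring_1 set \<Rightarrow> ('i \<Rightarrow> 'b) set \<Rightarrow> bool" where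
  "pseudoclosed m M \<longleftrightarrow> Bspan m M \<subseteq> M"

definition setadd :: "('i \<Rightarrow> 'b::comm_ring_1) set \<Rightarrow> ('i \<Rightarrow> 'b) set \<Rightarrow> ('i \<Rightarrow> 'b) set" where
  "setadd A C = {(\<lambda>i. a i + c i) | a c. a \<in> A \<and> c \<in> C}"

end

theory Submission
  imports Defs "HOL-Library.Countable_Set"
begin

text \<open>
  Since m^k is finitely generated and B/m = C, some finite F \<subseteq> m^k maps onto a basis of the
  C-vector space m^k/m^(k+1). Any element of m^k Y, for Y a C-subspace of the completed tensor
  product, is then a finite sum \<Sum>g\<in>F. g z_g with z_g \<in> Y plus an element of m^(k+1) Y: only
  finitely many coefficients of its series lie outside m^(k+1), and these are expanded along F.
  Do this for s \<in> m^k M, giving z_g \<in> M, and for its component a \<in> m^k V, giving w_g \<in> V.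
  As s - a \<in> m^(k+1) X, all coordinates of \<Sum>g\<in>F. g (z_g - w_g) lie in m^(k+1), and independence
  of F modulo m^(k+1) puts every coordinate of z_g - w_g into m. By m-adic separatedness such an
  element has countable support and is a convergent series in m X; hence z_g \<in> M \<inter> (V + m X)
  and s = \<Sum>g\<in>F. g z_g + (an element of m^(k+1) M).
\<close>

lemma ideal_0: "is_ideal I \<Longrightarrow> 0 \<in> I"
  by (simp add: is_ideal_def)

lemma ideal_add: "is_ideal I \<Longrightarrow> a \<in> I \<Longrightarrow> b \<in> I \<Longrightarrow> a + b \<in> I"
  by (simp add: is_ideal_def)

lemma ideal_mult_left: "is_ideal I \<Longrightarrow> a \<in> I \<Longrightarrow> r * a \<in> I"
  by (simp add: is_ideal_def)

lemma ideal_mult_right: "is_ideal I \<Longrightarrow> a \<in> I \<Longrightarrow> a * r \<in> I"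
  by (metis ideal_mult_left mult.commute)

lemma ideal_diff: "is_ideal I \<Longrightarrow> a \<in> I \<Longrightarrow> b \<in> I \<Longrightarrow> a - b \<in> I"
  using ideal_add[of I a "(- 1) * b"] ideal_mult_left[of I b "- 1"] by simp

lemma ideal_sum: "is_ideal I \<Longrightarrow> (\<And>x. x \<in> A \<Longrightarrow> f x \<in> I) \<Longrightarrow> sum f A \<in> I"
  by (induction A rule: infinite_finite_induct) (auto intro: ideal_0 ideal_add)

lemma idl_spanI: "(\<And>j. j < (n::nat) \<Longrightarrow> a j \<in> S) \<Longrightarrow> (\<Sum>j<n. r j * a j) \<in> idl_span S"
  unfolding idl_span_def by blast

lemma idl_spanE:
  assumes "x \<in> idl_span S"
  obtains n r a where "x = (\<Sum>j<(n::nat). r j * a j)" "\<And>j. j < n \<Longrightarrow> a j \<in> S"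
  using assms unfolding idl_span_def by blast

lemma idl_span_induct [consumes 1, case_names zero add_multiple]:
  assumes "x \<in> idl_span S" and "P 0"
    and "\<And>x a r. P x \<Longrightarrow> a \<in> S \<Longrightarrow> P (x + r * a)"
  shows "P x"
proof -
  obtain n r a where x: "x = (\<Sum>j<(n::nat). r j * a j)" and a: "\<And>j. j < n \<Longrightarrow> a j \<in> S"
    using assms(1) by (rule idl_spanE) blast
  have "P (\<Sum>j<p. r j * a j)" if "p \<le> n" for p
    using that by (induction p) (simp_all add: assms(2,3) a Suc_le_eq)
  then show ?thesis
    unfolding x by simp
qed

lemma idl_span_add_multiple:
  assumes "x \<in> idl_span S" "a \<in> S"
  shows "x + r * a \<in> idl_span S"
proof -
  obtain n rr aa where x: "x = (\<Sum>j<(n::nat). rr j * aa j)" and aa: "\<And>j. j < n \<Longrightarrow> aa j \<in> S"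
    using assms(1) by (rule idl_spanE) blast
  have "x + r * a = (\<Sum>j<Suc n. (rr(n := r)) j * (aa(n := a)) j)"
    unfolding x by (simp cong: sum.cong_simp)
  also have "\<dots> \<in> idl_span S"
    using aa assms(2) by (intro idl_spanI) (auto simp: less_Suc_eq)
  finally show ?thesis .
qed

lemma idl_span_ideal: "is_ideal (idl_span S)"
  unfolding is_ideal_def
proof (intro conjI ballI allI)
  show "0 \<in> idl_span S"
    using idl_spanI[of 0 _ S] by simp
next
  fix x y assume "x \<in> idl_span S" and "y \<in> idl_span S"
  from \<open>y \<in> idl_span S\<close> show "x + y \<in> idl_span S"
  proof (induction rule: idl_span_induct)
    case (add_multiple y a r)
    then show ?case
      using idl_span_add_multiple[of "x + y" S a r] by (simp add: add.assoc)
  qed (simp add: \<open>x \<in> idl_span S\<close>)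
next
  fix r x assume "x \<in> idl_span S"
  then obtain n rr a where x: "x = (\<Sum>j<(n::nat). rr j * a j)" and a: "\<And>j. j < n \<Longrightarrow> a j \<in> S"
    by (rule idl_spanE) blast
  have "r * x = (\<Sum>j<n. (r * rr j) * a j)"
    unfolding x by (simp add: sum_distrib_left mult.assoc)
  also have "\<dots> \<in> idl_span S"
    using a by (rule idl_spanI)
  finally show "r * x \<in> idl_span S" .
qed

lemma idl_span_superset: "S \<subseteq> idl_span S"
proof
  fix a assume "a \<in> S"
  then have "0 + 1 * a \<in> idl_span S"
    using ideal_0[OF idl_span_ideal] by (rule idl_span_add_multiple[rotated])
  then show "a \<in> idl_span S" by simp
qed

lemma idl_span_least: "is_ideal I \<Longrightarrow> S \<subseteq> I \<Longrightarrow> idl_span S \<subseteq> I"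
  unfolding idl_span_def by (auto intro!: ideal_sum ideal_mult_left)

declare idpow.simps(2) [simp del]

lemma idpow_ideal: "is_ideal (idpow m k)"
  by (cases k) (auto simp: is_ideal_def idpow.simps idl_span_ideal[unfolded is_ideal_def])

lemma zero_in_idpow [simp]: "0 \<in> idpow m k"
  by (rule ideal_0[OF idpow_ideal])

lemma idpow_mult: "a \<in> m \<Longrightarrow> b \<in> idpow m k \<Longrightarrow> a * b \<in> idpow m (Suc k)"
  using idl_span_superset by (fastforce simp: idpow.simps)

lemma idpow_Suc_subset: "idpow m (Suc k) \<subseteq> idpow m k"
proof (induction k)
  case (Suc k)
  have "a * b \<in> idpow m (Suc k)" if "a \<in> m" "b \<in> idpow m (Suc k)" for a b
    using that Suc idpow_mult by blast
  then show ?case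
    unfolding idpow.simps(2)[of m "Suc k"] by (intro idl_span_least[OF idpow_ideal]) blast
qed simp

lemma idpow_antimono: "k \<le> K \<Longrightarrow> idpow m K \<subseteq> idpow m k"
  by (induction K rule: dec_induct) (use idpow_Suc_subset in blast)+

lemma subset_idpow_1: "m \<subseteq> idpow m 1"
  using idpow_mult[of _ m 1 0] by auto

section \<open>Series representations of elements of m^k Y\<close>

lemma mpow_modI:
  assumes "\<And>n. y n \<in> Y" and "\<And>n. b n \<in> idpow m k"
    and "\<And>K. \<forall>\<^sub>F n in sequentially. b n \<in> idpow m K"
    and "series_conv m (\<lambda>n i. b n * y n i) s"
  shows "s \<in> mpow_mod m k Y"
proof -
  define A where "A n = {K. K \<le> max k n \<and> b n \<in> idpow m K}" for n
  define kk where "kk n = Max (A n)" for n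
  have fin: "finite (A n)" for n
    unfolding A_def by (rule finite_subset[of _ "{..max k n}"]) auto
  have "b n \<in> idpow m (kk n) \<and> k \<le> kk n" for n
  proof
    have "kk n \<in> A n"
      unfolding kk_def using fin assms(2) by (intro Max_in) (auto simp: A_def)
    then show "b n \<in> idpow m (kk n)" by (simp add: A_def)
    show "k \<le> kk n"
      unfolding kk_def using fin assms(2) by (intro Max_ge) (auto simp: A_def)
  qed
  moreover have "\<forall>\<^sub>F n in sequentially. K \<le> kk n" for K
    using eventually_conj[OF assms(3)[of K] eventually_ge_at_top[of K]]
  proof (rule eventually_mono)
    fix n assume "b n \<in> idpow m K \<and> K \<le> n"
    then show "K \<le> kk n"
      unfolding kk_def using fin by (intro Max_ge) (auto simp: A_def)
  qed
  ultimately show ?thesis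
    using assms(1,4) unfolding mpow_mod_def eventually_sequentially by blast
qed

lemma mpow_modE:
  assumes "s \<in> mpow_mod m k Y"
  obtains b y where "\<And>n. y n \<in> Y" and "\<And>n. b n \<in> idpow m k"
    and "\<And>K. \<forall>\<^sub>F n in sequentially. b n \<in> idpow m K"
    and "series_conv m (\<lambda>n i. b n * y n i) s"
proof -
  obtain b y kk where b: "\<And>n. y n \<in> Y \<and> b n \<in> idpow m (kk n) \<and> k \<le> kk n"
    and kk: "\<And>K. \<forall>\<^sub>F n in sequentially. K \<le> kk n"
    and s: "series_conv m (\<lambda>n i. b n * y n i) s"
    using assms unfolding mpow_mod_def eventually_sequentially by blast
  have "b n \<in> idpow m K" if "K \<le> kk n" for n K
    using b[of n] idpow_antimono[OF that] by blast
  then have "\<forall>\<^sub>F n in sequentially. b n \<in> idpow m K" for K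
    using kk[of K] by (rule eventually_mono[rotated])
  moreover have "b n \<in> idpow m k" for n
    using b[of n] idpow_antimono[of k "kk n" m] by blast
  ultimately show thesis
    using that b s by blast
qed

lemma mpow_mod_coord: "s \<in> mpow_mod m k Y \<Longrightarrow> s i \<in> idpow m k"
proof -
  assume "s \<in> mpow_mod m k Y"
  then obtain b y where b: "\<And>n. b n \<in> idpow m k" and s: "series_conv m (\<lambda>n i. b n * y n i) s"
    by (rule mpow_modE) blast
  obtain N where "s i - (\<Sum>j<N. b j * y j i) \<in> idpow m k"
    using s unfolding series_conv_def by blast
  moreover have "(\<Sum>j<N. b j * y j i) \<in> idpow m k"
    using b by (intro ideal_sum[OF idpow_ideal] ideal_mult_right[OF idpow_ideal])
  ultimately show "s i \<in> idpow m k"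
    using ideal_add[OF idpow_ideal] by fastforce
qed

lemma sum_in_mpow_mod:
  assumes "finite F" and "\<And>g. g \<in> F \<Longrightarrow> c g \<in> idpow m k" and "\<And>g. g \<in> F \<Longrightarrow> z g \<in> Y"
    and "(\<lambda>i. 0) \<in> Y"
  shows "(\<lambda>i. \<Sum>g\<in>F. c g * z g i) \<in> mpow_mod m k Y"
proof -
  obtain h where h: "bij_betw h {..<card F} F"
    using ex_bij_betw_nat_finite[OF assms(1)] by (auto simp: atLeast0LessThan)
  then have hF: "h n \<in> F" if "n < card F" for n
    using that by (auto dest: bij_betwE)
  define b where "b n = (if n < card F then c (h n) else 0)" for n
  define y where "y n = (if n < card F then z (h n) else (\<lambda>i. 0))" for n
  have "(\<Sum>j<n. b j * y j i) = (\<Sum>g\<in>F. c g * z g i)" if "card F \<le> n" for n i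
  proof -
    have "(\<Sum>j<n. b j * y j i) = (\<Sum>j<card F. c (h j) * z (h j) i)"
      using that by (intro sum.mono_neutral_cong_right) (auto simp: b_def y_def)
    also have "\<dots> = (\<Sum>g\<in>F. c g * z g i)"
      by (rule sum.reindex_bij_betw[OF h])
    finally show ?thesis .
  qed
  then have "series_conv m (\<lambda>n i. b n * y n i) (\<lambda>i. \<Sum>g\<in>F. c g * z g i)"
    unfolding series_conv_def by (auto intro!: exI[of _ "card F"])
  moreover have "\<forall>\<^sub>F n in sequentially. b n \<in> idpow m K" for K
    using eventually_ge_at_top[of "card F"] by (rule eventually_mono) (simp add: b_def)
  ultimately show ?thesis
    using assms(2-4) hF by (intro mpow_modI) (auto simp: b_def y_def)
qed

lemma zero_in_mpow_mod: "(\<lambda>i. 0) \<in> Y \<Longrightarrow> (\<lambda>i. 0) \<in> mpow_mod m k Y"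
  using sum_in_mpow_mod[of "{}"] by simp

lemma series_conv_change_prefix:
  assumes "series_conv m (\<lambda>n i. b n * y n i) s" and "\<And>n. N \<le> n \<Longrightarrow> e n = b n"
  shows "series_conv m (\<lambda>n i. e n * y n i) (\<lambda>i. s i - (\<Sum>n<N. (b n - e n) * y n i))"
  unfolding series_conv_def
proof
  fix K
  obtain N' where N': "\<And>n i. N' \<le> n \<Longrightarrow> s i - (\<Sum>j<n. b j * y j i) \<in> idpow m K"
    using assms(1) unfolding series_conv_def by blast
  have shift: "s i - (\<Sum>j<N. (b j - e j) * y j i) - (\<Sum>j<n. e j * y j i)
      = s i - (\<Sum>j<n. b j * y j i)" if "N \<le> n" for n i
  proof -
    have "(\<Sum>j<N. (b j - e j) * y j i) = (\<Sum>j<n. (b j - e j) * y j i)"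
      using that assms(2) by (intro sum.mono_neutral_left) auto
    then show ?thesis
      by (simp add: left_diff_distrib sum_subtractf)
  qed
  show "\<exists>N''. \<forall>n\<ge>N''. \<forall>i. s i - (\<Sum>n<N. (b n - e n) * y n i) - (\<Sum>j<n. e j * y j i)
      \<in> idpow m K"
  proof (intro exI[of _ "max N N'"] allI impI)
    fix n i assume "max N N' \<le> n"
    then show "s i - (\<Sum>n<N. (b n - e n) * y n i) - (\<Sum>j<n. e j * y j i) \<in> idpow m K"
      using N'[of n i] by (subst shift) auto
  qed
qed

section \<open>Residue bases of m^k/m^(k+1)\<close>

text \<open>F spans (is a basis of) the C-vector space m^k/m^(k+1), with C acting through emb.\<close>

definition residue_spanning :: "(complex \<Rightarrow> 'b::comm_ring_1) \<Rightarrow> 'b set \<Rightarrow> nat \<Rightarrow> 'b set \<Rightarrow> bool"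
  where "residue_spanning emb m k F \<longleftrightarrow> finite F \<and> F \<subseteq> idpow m k \<and>
    (\<forall>b\<in>idpow m k. \<exists>c. b - (\<Sum>g\<in>F. emb (c g) * g) \<in> idpow m (Suc k))"

definition residue_basis :: "(complex \<Rightarrow> 'b::comm_ring_1) \<Rightarrow> 'b set \<Rightarrow> nat \<Rightarrow> 'b set \<Rightarrow> bool"
  where "residue_basis emb m k F \<longleftrightarrow> residue_spanning emb m k F \<and>
    (\<forall>d. (\<Sum>g\<in>F. emb (d g) * g) \<in> idpow m (Suc k) \<longrightarrow> (\<forall>g\<in>F. d g = 0))"

lemma residue_spanning_generators:
  assumes emb: "additive emb" and res: "\<And>b. \<exists>c. b - emb c \<in> m"
    and "finite F" and gen: "idpow m k = idl_span F"
  shows "residue_spanning emb m k F"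
proof -
  have "\<exists>c. b - (\<Sum>g\<in>F. emb (c g) * g) \<in> idpow m (Suc k)" if "b \<in> idl_span F" for b
    using that
  proof (induction rule: idl_span_induct)
    case zero
    show ?case
      by (intro exI[of _ "\<lambda>_. 0"]) (simp add: additive.zero[OF emb])
  next
    case (add_multiple x a r)
    then obtain c where c: "x - (\<Sum>g\<in>F. emb (c g) * g) \<in> idpow m (Suc k)" by blast
    obtain c0 where c0: "r - emb c0 \<in> m" using res by blast
    define c' where "c' g = c g + (if g = a then c0 else 0)" for g
    have "(\<Sum>g\<in>F. emb (c' g) * g) = (\<Sum>g\<in>F. emb (c g) * g) + emb c0 * a"
      using \<open>finite F\<close> \<open>a \<in> F\<close>
      by (simp add: c'_def additive.add[OF emb] additive.zero[OF emb] distrib_right sum.distrib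
          if_distrib[of emb] if_distrib[of "\<lambda>t. t * _"] cong: if_cong)
    then have "x + r * a - (\<Sum>g\<in>F. emb (c' g) * g)
        = (x - (\<Sum>g\<in>F. emb (c g) * g)) + (r - emb c0) * a"
      by (simp add: algebra_simps)
    also have "\<dots> \<in> idpow m (Suc k)"
      using c c0 \<open>a \<in> F\<close> gen idl_span_superset
      by (intro ideal_add[OF idpow_ideal] idpow_mult) auto
    finally show ?case by blast
  qed
  then show ?thesis
    unfolding residue_spanning_def using \<open>finite F\<close> gen idl_span_superset by auto
qed

lemma residue_spanning_remove:
  assumes emb: "additive emb" and emb_mult: "\<And>a c. emb (a * c) = emb a * emb c"
    and sp: "residue_spanning emb m k F"
    and d: "(\<Sum>g\<in>F. emb (d g) * g) \<in> idpow m (Suc k)" and "g0 \<in> F" and "d g0 \<noteq> 0"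
  shows "residue_spanning emb m k (F - {g0})"
  unfolding residue_spanning_def
proof (intro conjI ballI)
  show "finite (F - {g0})" and "F - {g0} \<subseteq> idpow m k"
    using sp unfolding residue_spanning_def by auto
  have fin: "finite F"
    using sp unfolding residue_spanning_def by blast
  fix b assume "b \<in> idpow m k"
  then obtain c where c: "b - (\<Sum>g\<in>F. emb (c g) * g) \<in> idpow m (Suc k)"
    using sp unfolding residue_spanning_def by blast
  define l where "l = c g0 / d g0"
  define c' where "c' g = c g - l * d g" for g
  have "c' g0 = 0"
    unfolding c'_def l_def using \<open>d g0 \<noteq> 0\<close> by simp
  then have "(\<Sum>g\<in>F - {g0}. emb (c' g) * g) = (\<Sum>g\<in>F. emb (c' g) * g)"
    using fin \<open>g0 \<in> F\<close> by (simp add: sum.remove additive.zero[OF emb])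
  also have "\<dots> = (\<Sum>g\<in>F. emb (c g) * g) - emb l * (\<Sum>g\<in>F. emb (d g) * g)"
    unfolding c'_def
    by (simp add: additive.diff[OF emb] emb_mult sum_subtractf sum_distrib_left algebra_simps)
  finally have "b - (\<Sum>g\<in>F - {g0}. emb (c' g) * g)
      = (b - (\<Sum>g\<in>F. emb (c g) * g)) + emb l * (\<Sum>g\<in>F. emb (d g) * g)"
    by (simp add: algebra_simps)
  also have "\<dots> \<in> idpow m (Suc k)"
    using c d by (intro ideal_add[OF idpow_ideal] ideal_mult_left[OF idpow_ideal])
  finally show "\<exists>c. b - (\<Sum>g\<in>F - {g0}. emb (c g) * g) \<in> idpow m (Suc k)" by blast
qed

lemma ex_residue_basis:
  fixes emb :: "complex \<Rightarrow> 'b::comm_ring_1"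
  assumes emb: "additive emb" and emb_mult: "\<And>a c. emb (a * c) = emb a * emb c"
    and res: "\<And>b. \<exists>c. b - emb c \<in> m" and noeth: "noetherian_ring TYPE('b)"
  shows "\<exists>F. residue_basis emb m k F"
proof -
  obtain F0 where "finite F0" and "idpow m k = idl_span F0"
    using noeth idpow_ideal[of m k] unfolding noetherian_ring_def by blast
  then have "residue_spanning emb m k F0"
    by (rule residue_spanning_generators[OF emb res])
  then obtain F where sp: "residue_spanning emb m k F"
    and min: "\<And>F'. residue_spanning emb m k F' \<Longrightarrow> card F \<le> card F'"
    using ex_has_least_nat[of "residue_spanning emb m k" F0 card] by blast
  have "d g = 0" if "(\<Sum>g\<in>F. emb (d g) * g) \<in> idpow m (Suc k)" and "g \<in> F" for d g
  proof (rule ccontr)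
    assume "d g \<noteq> 0"
    with that have "card F \<le> card (F - {g})"
      using min residue_spanning_remove[OF emb emb_mult sp] by blast
    moreover have "card (F - {g}) < card F"
      using sp \<open>g \<in> F\<close> unfolding residue_spanning_def by (intro card_Diff1_less) auto
    ultimately show False
      by simp
  qed
  then show ?thesis
    using sp unfolding residue_basis_def by blast
qed

lemma residue_basis_coeffs_in_ideal:
  assumes emb: "additive emb" and res: "\<And>b. \<exists>c. b - emb c \<in> m"
    and basis: "residue_basis emb m k F"
    and u: "(\<Sum>g\<in>F. g * u g) \<in> idpow m (Suc k)" and "g \<in> F"
  shows "u g \<in> m"
proof -
  have "\<forall>g. \<exists>c. u g - emb c \<in> m"
    using res by blast
  then obtain d where d: "\<And>g. u g - emb (d g) \<in> m"
    by metis
  have F: "F \<subseteq> idpow m k"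
    using basis unfolding residue_basis_def residue_spanning_def by blast
  have "(\<Sum>g\<in>F. emb (d g) * g) = (\<Sum>g\<in>F. g * u g) - (\<Sum>g\<in>F. (u g - emb (d g)) * g)"
    by (simp add: sum_subtractf[symmetric] algebra_simps)
  also have "\<dots> \<in> idpow m (Suc k)"
  proof (rule ideal_diff[OF idpow_ideal u])
    show "(\<Sum>g\<in>F. (u g - emb (d g)) * g) \<in> idpow m (Suc k)"
      using d F by (intro ideal_sum[OF idpow_ideal] idpow_mult) auto
  qed
  finally have "d g = 0"
    using basis \<open>g \<in> F\<close> unfolding residue_basis_def by blast
  then show ?thesis
    using d[of g] by (simp add: additive.zero[OF emb])
qed

definition emb_subspace :: "(complex \<Rightarrow> 'b::comm_ring_1) \<Rightarrow> ('i \<Rightarrow> 'b) set \<Rightarrow> bool"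
  where "emb_subspace emb Y \<longleftrightarrow> (\<lambda>i. 0) \<in> Y \<and> (\<forall>x\<in>Y. \<forall>y\<in>Y. (\<lambda>i. x i + y i) \<in> Y) \<and>
    (\<forall>c. \<forall>x\<in>Y. (\<lambda>i. emb c * x i) \<in> Y)"

lemma emb_subspace_zero: "emb_subspace emb Y \<Longrightarrow> (\<lambda>i. 0) \<in> Y"
  by (simp add: emb_subspace_def)

lemma emb_subspace_sum:
  assumes Y: "emb_subspace emb Y" and y: "\<And>n. n \<in> A \<Longrightarrow> y n \<in> Y"
  shows "(\<lambda>i. \<Sum>n\<in>A. emb (c n) * y n i) \<in> Y"
  using y
proof (induction A rule: infinite_finite_induct)
  case (insert n A)
  then show ?case
    using Y unfolding emb_subspace_def by simp
qed (use Y in \<open>simp_all add: emb_subspace_def\<close>)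

lemma B_submodule_emb_subspace: "B_submodule m M \<Longrightarrow> emb_subspace emb M"
  by (simp add: B_submodule_def emb_subspace_def)

lemma incl_image_emb_subspace:
  assumes "additive emb" and "\<And>a c. emb (a * c) = emb a * emb c" and "lin_subspace V"
  shows "emb_subspace emb (incl emb ` V)"
proof -
  have V: "(\<lambda>i. 0) \<in> V" "\<And>x y. x \<in> V \<Longrightarrow> y \<in> V \<Longrightarrow> (\<lambda>i. x i + y i) \<in> V"
    "\<And>c x. x \<in> V \<Longrightarrow> (\<lambda>i. c * x i) \<in> V"
    using assms(3) unfolding lin_subspace_def by blast+
  show ?thesis
    unfolding emb_subspace_def
  proof (intro conjI ballI allI)
    show "(\<lambda>i. 0) \<in> incl emb ` V"
      using V(1) by (rule image_eqI[rotated]) (simp add: incl_def additive.zero[OF assms(1)])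
    fix x y assume "x \<in> incl emb ` V" and "y \<in> incl emb ` V"
    then obtain u v where "u \<in> V" "v \<in> V" "x = incl emb u" "y = incl emb v"
      by blast
    then show "(\<lambda>i. x i + y i) \<in> incl emb ` V"
      using V(2) by (intro image_eqI[of _ _ "\<lambda>i. u i + v i"])
        (simp_all add: incl_def additive.add[OF assms(1)])
  next
    fix c x assume "x \<in> incl emb ` V"
    then obtain u where "u \<in> V" "x = incl emb u"
      by blast
    then show "(\<lambda>i. emb c * x i) \<in> incl emb ` V"
      using V(3) by (intro image_eqI[of _ _ "\<lambda>i. c * u i"]) (simp_all add: incl_def assms(2))
  qed
qed

lemma mpow_mod_decompose:
  assumes sp: "residue_spanning emb m k F" and Y: "emb_subspace emb Y"
    and s: "s \<in> mpow_mod m k Y"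
  obtains z where "\<And>g. z g \<in> Y"
    and "(\<lambda>i. s i - (\<Sum>g\<in>F. g * z g i)) \<in> mpow_mod m (Suc k) Y"
proof -
  obtain b y where y: "\<And>n. y n \<in> Y" and b: "\<And>n. b n \<in> idpow m k"
    and b_ev: "\<And>K. \<forall>\<^sub>F n in sequentially. b n \<in> idpow m K"
    and conv: "series_conv m (\<lambda>n i. b n * y n i) s"
    using s by (rule mpow_modE) blast
  obtain N where N: "\<And>n. N \<le> n \<Longrightarrow> b n \<in> idpow m (Suc k)"
    using b_ev[of "Suc k"] unfolding eventually_sequentially by blast
  have "\<forall>n. \<exists>c. b n - (\<Sum>g\<in>F. emb (c g) * g) \<in> idpow m (Suc k)"
    using sp b unfolding residue_spanning_def by blast
  then obtain c where c: "\<And>n. b n - (\<Sum>g\<in>F. emb (c n g) * g) \<in> idpow m (Suc k)"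
    by metis
  \<comment> \<open>Only the coefficients with n < N lie outside m^(k+1); expand them along F.\<close>
  define z where "z g = (\<lambda>i. \<Sum>n<N. emb (c n g) * y n i)" for g
  define e where "e n = (if n < N then b n - (\<Sum>g\<in>F. emb (c n g) * g) else b n)" for n
  have "(\<Sum>n<N. (b n - e n) * y n i) = (\<Sum>n<N. \<Sum>g\<in>F. g * (emb (c n g) * y n i))" for i
    by (simp add: e_def sum_distrib_left sum_distrib_right mult_ac)
  also have "\<dots> i = (\<Sum>g\<in>F. g * z g i)" for i
    unfolding z_def sum_distrib_left by (rule sum.swap)
  finally have "series_conv m (\<lambda>n i. e n * y n i) (\<lambda>i. s i - (\<Sum>g\<in>F. g * z g i))"
    using series_conv_change_prefix[OF conv, of N e] by (simp add: e_def)
  moreover have "e n \<in> idpow m (Suc k)" for n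
    using c N by (simp add: e_def)
  moreover have "\<forall>\<^sub>F n in sequentially. e n \<in> idpow m K" for K
    using eventually_conj[OF b_ev[of K] eventually_ge_at_top[of N]]
    by (rule eventually_mono) (simp add: e_def)
  ultimately have "(\<lambda>i. s i - (\<Sum>g\<in>F. g * z g i)) \<in> mpow_mod m (Suc k) Y"
    using y by (intro mpow_modI)
  moreover have "z g \<in> Y" for g
    unfolding z_def using Y y by (rule emb_subspace_sum)
  ultimately show ?thesis
    using that by blast
qed

lemma mpow_mod_decompose_congruent:
  assumes emb: "additive emb" and res: "\<And>b. \<exists>c. b - emb c \<in> m"
    and basis: "residue_basis emb m k F" and Y: "emb_subspace emb Y" and Z: "emb_subspace emb Z"
    and s: "s \<in> mpow_mod m k Y" and a: "a \<in> mpow_mod m k Z"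
    and sa: "\<And>i. s i - a i \<in> idpow m (Suc k)"
  obtains z w where "\<And>g. z g \<in> Y" and "\<And>g. w g \<in> Z" and "\<And>g i. g \<in> F \<Longrightarrow> z g i - w g i \<in> m"
    and "(\<lambda>i. s i - (\<Sum>g\<in>F. g * z g i)) \<in> mpow_mod m (Suc k) Y"
proof -
  have sp: "residue_spanning emb m k F"
    using basis by (simp add: residue_basis_def)
  obtain z where z: "\<And>g. z g \<in> Y" and rz: "(\<lambda>i. s i - (\<Sum>g\<in>F. g * z g i)) \<in> mpow_mod m (Suc k) Y"
    using mpow_mod_decompose[OF sp Y s] by blast
  obtain w where w: "\<And>g. w g \<in> Z" and rw: "(\<lambda>i. a i - (\<Sum>g\<in>F. g * w g i)) \<in> mpow_mod m (Suc k) Z"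
    using mpow_mod_decompose[OF sp Z a] by blast
  have combination: "(\<Sum>g\<in>F. g * (z g i - w g i)) \<in> idpow m (Suc k)" for i
  proof -
    have "(\<Sum>g\<in>F. g * (z g i - w g i))
        = (s i - a i) - (s i - (\<Sum>g\<in>F. g * z g i)) + (a i - (\<Sum>g\<in>F. g * w g i))"
      by (simp add: sum_subtractf right_diff_distrib)
    also have "\<dots> \<in> idpow m (Suc k)"
      using ideal_add[OF idpow_ideal ideal_diff[OF idpow_ideal sa[of i] mpow_mod_coord[OF rz, of i]]
          mpow_mod_coord[OF rw, of i]] by simp
    finally show ?thesis .
  qed
  have "z g i - w g i \<in> m" if "g \<in> F" for g i
    using residue_basis_coeffs_in_ideal[OF emb res basis combination[of i] that] .
  then show ?thesis
    using that z w rz by blast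
qed

section \<open>Elements of the completed tensor product with coordinates in m^k\<close>

lemma incl_in_BX:
  assumes "additive emb" and "x \<in> Xsp"
  shows "incl emb x \<in> BX m"
proof -
  have "{i. emb (x i) \<notin> idpow m K} \<subseteq> {i. x i \<noteq> 0}" for K
    using additive.zero[OF assms(1)] by auto
  then show ?thesis
    using assms(2) unfolding BX_def Xsp_def incl_def by (auto intro: finite_subset)
qed

lemma BX_diff: "x \<in> BX m \<Longrightarrow> y \<in> BX m \<Longrightarrow> (\<lambda>i. x i - y i) \<in> BX m"
proof -
  assume x: "x \<in> BX m" and y: "y \<in> BX m"
  have "{i. x i - y i \<notin> idpow m K} \<subseteq> {i. x i \<notin> idpow m K} \<union> {i. y i \<notin> idpow m K}" for K
    using ideal_diff[OF idpow_ideal] by blast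
  moreover have "finite ({i. x i \<notin> idpow m K} \<union> {i. y i \<notin> idpow m K})" for K
    using x y unfolding BX_def by blast
  ultimately have "finite {i. x i - y i \<notin> idpow m K}" for K
    by (rule finite_subset)
  then show ?thesis
    unfolding BX_def by blast
qed

lemma countable_support_BX:
  assumes sep: "(\<Inter>k. idpow m k) = {0}" and "f \<in> BX m"
  shows "countable {i. f i \<noteq> 0}"
proof -
  have "{i. f i \<noteq> 0} \<subseteq> (\<Union>K. {i. f i \<notin> idpow m K})"
    using sep by auto
  moreover have "finite {i. f i \<notin> idpow m K}" for K
    using \<open>f \<in> BX m\<close> unfolding BX_def by blast
  then have "countable (\<Union>K. {i. f i \<notin> idpow m K})"
    by (intro countable_UN countableI_type countable_finite)
  ultimately show ?thesis
    by (rule countable_subset)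
qed

definition unit_vec :: "'i \<Rightarrow> 'i \<Rightarrow> complex"
  where "unit_vec j = (\<lambda>i. if i = j then 1 else 0)"

lemma unit_vec_in_Xsp: "unit_vec j \<in> Xsp"
proof -
  have "{i. unit_vec j i \<noteq> 0} = {j}"
    by (auto simp: unit_vec_def)
  then show ?thesis
    by (simp add: Xsp_def)
qed

lemma incl_unit_vec: "emb 0 = 0 \<Longrightarrow> emb 1 = 1 \<Longrightarrow> incl emb (unit_vec j) i = (if i = j then 1 else 0)"
  by (simp add: incl_def unit_vec_def)

lemma zero_in_incl_Xsp: "emb 0 = 0 \<Longrightarrow> (\<lambda>i. 0) \<in> incl emb ` Xsp"
  by (rule image_eqI[of _ _ "\<lambda>i. 0"]) (auto simp: incl_def Xsp_def)

lemma finite_support_in_mpow_mod_Xsp: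
  assumes "emb 0 = 0" "emb 1 = 1" and fin: "finite {i. f i \<noteq> 0}" and fk: "\<And>i. f i \<in> idpow m k"
  shows "f \<in> mpow_mod m k (incl emb ` Xsp)"
proof -
  have "f = (\<lambda>i. \<Sum>j\<in>{i. f i \<noteq> 0}. f j * incl emb (unit_vec j) i)"
    using fin by (auto simp: incl_unit_vec[OF assms(1,2)] if_distrib[of "\<lambda>t. _ * t"] cong: if_cong)
  also have "\<dots> \<in> mpow_mod m k (incl emb ` Xsp)"
  proof (rule sum_in_mpow_mod[OF fin])
    show "f j \<in> idpow m k" for j
      by (rule fk)
    show "incl emb (unit_vec j) \<in> incl emb ` Xsp" for j
      using unit_vec_in_Xsp by (rule imageI)
    show "(\<lambda>i. 0) \<in> incl emb ` Xsp"
      using assms(1) by (rule zero_in_incl_Xsp)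
  qed
  finally show ?thesis .
qed

lemma enumerated_support_in_mpow_mod_Xsp:
  fixes en :: "nat \<Rightarrow> 'i"
  assumes "emb 0 = 0" "emb 1 = 1" and f: "f \<in> BX m" and fk: "\<And>i. f i \<in> idpow m k"
    and en: "inj en" "{i. f i \<noteq> 0} \<subseteq> range en"
  shows "f \<in> mpow_mod m k (incl emb ` Xsp)"
proof (rule mpow_modI)
  show "incl emb (unit_vec (en n)) \<in> incl emb ` Xsp" for n
    using unit_vec_in_Xsp by (rule imageI)
  show "f (en n) \<in> idpow m k" for n
    by (rule fk)
  have fin: "finite (en -` {i. f i \<notin> idpow m K})" for K
    using f unfolding BX_def by (intro finite_vimageI[OF _ en(1)]) blast
  then show "\<forall>\<^sub>F n in sequentially. f (en n) \<in> idpow m K" for K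
    by (simp add: cofinite_eq_sequentially[symmetric] eventually_cofinite)
  have partial: "(\<Sum>j<n. f (en j) * incl emb (unit_vec (en j)) i)
      = (if i \<in> en ` {..<n} then f i else 0)" for n i
  proof -
    have "(\<Sum>j<n. f (en j) * incl emb (unit_vec (en j)) i)
        = (\<Sum>x\<in>en ` {..<n}. f x * incl emb (unit_vec x) i)"
      using en(1) by (simp add: sum.reindex inj_on_subset)
    also have "\<dots> = (\<Sum>x\<in>en ` {..<n}. if i = x then f x else 0)"
      by (intro sum.cong) (simp_all add: incl_unit_vec[OF assms(1,2)])
    finally show ?thesis
      by simp
  qed
  show "series_conv m (\<lambda>n i. f (en n) * incl emb (unit_vec (en n)) i) f"
    unfolding series_conv_def
  proof
    fix K
    obtain N where N: "en -` {i. f i \<notin> idpow m K} \<subseteq> {..<N}"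
      using finite_nat_bounded[OF fin] by blast
    have tail: "f i \<in> idpow m K" if "i \<notin> en ` {..<n}" and "N \<le> n" for i n
    proof (rule ccontr)
      assume i: "f i \<notin> idpow m K"
      then have "f i \<noteq> 0"
        by auto
      then obtain j where "i = en j"
        using en(2) by blast
      then show False
        using N i that by auto
    qed
    show "\<exists>N. \<forall>n\<ge>N. \<forall>i. f i - (\<Sum>j<n. f (en j) * incl emb (unit_vec (en j)) i) \<in> idpow m K"
    proof (intro exI[of _ N] allI impI)
      fix n i assume "N \<le> n"
      then show "f i - (\<Sum>j<n. f (en j) * incl emb (unit_vec (en j)) i) \<in> idpow m K"
        using tail[of i n] by (simp add: partial)
    qed
  qed
qed

lemma BX_in_mpow_mod_Xsp:
  fixes emb :: "complex \<Rightarrow> 'b::comm_ring_1"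
  assumes "emb 0 = 0" "emb 1 = 1" and sep: "(\<Inter>k. idpow m k) = {0}"
    and f: "f \<in> BX m" and fk: "\<And>i. f i \<in> idpow m k"
  shows "f \<in> mpow_mod m k (incl emb ` Xsp)"
proof (cases "finite {i. f i \<noteq> 0}")
  case True
  then show ?thesis
    using finite_support_in_mpow_mod_Xsp[OF assms(1,2)] fk by blast
next
  case False
  define en where "en = from_nat_into {i. f i \<noteq> 0}"
  have en: "bij_betw en UNIV {i. f i \<noteq> 0}"
    unfolding en_def using countable_support_BX[OF sep f] False by (rule bij_betw_from_nat_into)
  show ?thesis
  proof (rule enumerated_support_in_mpow_mod_Xsp[OF assms(1,2) f fk])
    show "inj en"
      using en by (rule bij_betw_imp_inj_on)
    show "{i. f i \<noteq> 0} \<subseteq> range en"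
      using en by (simp add: bij_betw_imp_surj_on)
  qed
qed

lemma congruent_mod_m_in_setadd:
  assumes emb: "additive emb" "emb 1 = 1" and sep: "(\<Inter>k. idpow m k) = {0}"
    and "z \<in> BX m" and w: "w \<in> incl emb ` V" and "V \<subseteq> Xsp" and zw: "\<And>i. z i - w i \<in> m"
  shows "z \<in> setadd (incl emb ` V) (mpow_mod m 1 (incl emb ` Xsp))"
proof -
  have "w \<in> BX m"
    using w \<open>V \<subseteq> Xsp\<close> incl_in_BX[OF emb(1)] by blast
  then have "(\<lambda>i. z i - w i) \<in> BX m"
    using \<open>z \<in> BX m\<close> by (intro BX_diff)
  then have "(\<lambda>i. z i - w i) \<in> mpow_mod m 1 (incl emb ` Xsp)"
    using zw subset_idpow_1
    by (intro BX_in_mpow_mod_Xsp[OF additive.zero[OF emb(1)] emb(2) sep]) blast+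
  then show ?thesis
    using w unfolding setadd_def by force
qed

lemma deformation_baseD:
  fixes emb :: "complex \<Rightarrow> 'b::comm_ring_1"
  assumes "deformation_base emb m"
  shows "additive emb" and "\<And>a c. emb (a * c) = emb a * emb c" and "emb 1 = 1"
    and "\<And>b. \<exists>c. b - emb c \<in> m" and "noetherian_ring TYPE('b)" and "(\<Inter>k. idpow m k) = {0}"
  using assms unfolding deformation_base_def by (auto intro: additive.intro)

theorem proposition2p32:
  fixes emb :: "complex \<Rightarrow> 'b::comm_ring_1" and m :: "'b set"
    and V :: "('i \<Rightarrow> complex) set" and M :: "('i \<Rightarrow> 'b) set" and k :: nat
  assumes "deformation_base emb m"
    and "lin_subspace V"
    and "B_submodule m M" and "pseudoclosed m M"
  shows "mpow_mod m k M \<inter>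
           setadd (mpow_mod m k (incl emb ` V)) (mpow_mod m (Suc k) (incl emb ` Xsp))
         \<subseteq> setadd (mpow_mod m k (M \<inter> setadd (incl emb ` V) (mpow_mod m 1 (incl emb ` Xsp))))
                  (mpow_mod m (Suc k) M)"
proof
  let ?W = "M \<inter> setadd (incl emb ` V) (mpow_mod m 1 (incl emb ` Xsp))"
  note emb = deformation_baseD[OF assms(1)]
  have V: "emb_subspace emb (incl emb ` V)" "V \<subseteq> Xsp"
    using incl_image_emb_subspace[OF emb(1,2) assms(2)] assms(2) by (auto simp: lin_subspace_def)
  have M: "emb_subspace emb M" "M \<subseteq> BX m"
    using assms(3) by (auto simp: B_submodule_emb_subspace B_submodule_def)
  fix s assume "s \<in> mpow_mod m k M \<inter>
    setadd (mpow_mod m k (incl emb ` V)) (mpow_mod m (Suc k) (incl emb ` Xsp))"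
  then obtain a c where sM: "s \<in> mpow_mod m k M" and a: "a \<in> mpow_mod m k (incl emb ` V)"
    and c: "c \<in> mpow_mod m (Suc k) (incl emb ` Xsp)" and s: "s = (\<lambda>i. a i + c i)"
    unfolding setadd_def by blast
  obtain F where F: "residue_basis emb m k F"
    using ex_residue_basis[OF emb(1,2,4,5)] by blast
  have "s i - a i \<in> idpow m (Suc k)" for i
    using mpow_mod_coord[OF c] by (simp add: s)
  then obtain z w where z: "\<And>g. z g \<in> M" and w: "\<And>g. w g \<in> incl emb ` V"
    and zw: "\<And>g i. g \<in> F \<Longrightarrow> z g i - w g i \<in> m"
    and r: "(\<lambda>i. s i - (\<Sum>g\<in>F. g * z g i)) \<in> mpow_mod m (Suc k) M"
    using mpow_mod_decompose_congruent[OF emb(1,4) F M(1) V(1) sM a] by blast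
  have "z g \<in> ?W" if "g \<in> F" for g
    using congruent_mod_m_in_setadd[OF emb(1,3,6) _ w V(2) zw[OF that]] z M(2) by blast
  moreover have "(\<lambda>i. 0) \<in> ?W"
    using emb_subspace_zero[OF M(1)] emb_subspace_zero[OF V(1)]
      zero_in_mpow_mod[OF zero_in_incl_Xsp[of emb, OF additive.zero[OF emb(1)]]]
    unfolding setadd_def by force
  ultimately have "(\<lambda>i. \<Sum>g\<in>F. g * z g i) \<in> mpow_mod m k ?W"
    using F unfolding residue_basis_def residue_spanning_def by (intro sum_in_mpow_mod) auto
  then show "s \<in> setadd (mpow_mod m k ?W) (mpow_mod m (Suc k) M)"
    using r unfolding setadd_def by force
qed

end
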